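(* Let $\mathbb F\subseteq\mathbb D$ be finite and let $(h,i)\in\mathbb F$ be $\mathbb F$-admissible. Then $|\Phi_h^{(i)}(\mathbb F)|=|\mathbb F|+1$ and $\mathrm{lh}(\Phi_h^{(i)}(\mathbb F))=\mathrm{lh}(\mathbb F)$.
   Context: Dyadic intervals: $\Delta_k^{(j)}:=[\frac{j-1}{2^k},\frac{j}{2^k})$ for $k\ge0$. Dyadic tree $\mathbb D:=\{(k,j):k\ge1;\ j=1,\dots,2^{k-1}\}$. Branches: $\mathbb B(t):=\{(k,j)\in\mathbb D:t\in\Delta_{k-1}^{(j)}\}$ for $t\in[0,1)$; local height $\mathrm{lh}(\mathbb F):=\max_{t\in[0,1)}|\mathbb F\cap\mathbb B(t)|$. An index $(h,i)\in\mathbb F$ is $\mathbb F$-admissible if neither $(h+1,2i-1)$ nor $(h+1,2i)$ belongs to $\mathbb F$. The fork is $\mathbb F_h^{(i)}:=\{(h,i),(h+1,2i-1),(h+1,2i)\}$. For $(k,j)\in\mathbb D$ define $j^\ast$ by: $j^\ast=j+2^{k-h-2}$ if $\Delta_{k-1}^{(j)}\subseteq\Delta_{h+1}^{(4i-2)}$; $j^\ast=j-2^{k-h-2}$ if $\Delta_{k-1}^{(j)}\subseteq\Delta_{h+1}^{(4i-1)}$; $j^\ast=j$ otherwise (equivalently $\chi_k^{(j)}\circ\phi_h^{(i)}=\chi_k^{(j^\ast)}$ for $(k,j)\notin\mathbb F_h^{(i)}$, where $\phi_h^{(i)}$ is the map of $[0,1)$ interchanging $\Delta_{h+1}^{(4i-2)}$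 and $\Delta_{h+1}^{(4i-1)}$ by translation and $\chi_k^{(j)}$ are the $L_2$-normalized Haar functions, $\chi_k^{(j)}=\pm2^{(k-1)/2}$ on $\Delta_k^{(2j-1)}$ resp. $\Delta_k^{(2j)}$). Then $\Phi_h^{(i)}(\mathbb F):=\{(h+1,2i-1),(h+1,2i)\}\cup\{(k,j^\ast):(k,j)\in\mathbb F\setminus\mathbb F_h^{(i)}\}$. *)

theory Defs
  imports Complex_Main
begin

definition dint :: "nat \<Rightarrow> nat \<Rightarrow> real set" where
  "dint k j = {(real j - 1) / 2 ^ k ..< real j / 2 ^ k}"

definition dtree :: "(nat \<times> nat) set" where
  "dtree = {(k, j). 1 \<le> k \<and> 1 \<le> j \<and> j \<le> 2 ^ (k - 1)}"

definition branch :: "real \<Rightarrow> (nat \<times> nat) set" where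
  "branch t = {(k, j) \<in> dtree. t \<in> dint (k - 1) j}"

definition lh :: "(nat \<times> nat) set \<Rightarrow> nat" where
  "lh F = Max ((\<lambda>t. card (F \<inter> branch t)) ` {0..<1})"

definition admissible :: "(nat \<times> nat) set \<Rightarrow> nat \<Rightarrow> nat \<Rightarrow> bool" where
  "admissible F h i \<longleftrightarrow> (h, i) \<in> F \<and> (h + 1, 2 * i - 1) \<notin> F \<and> (h + 1, 2 * i) \<notin> F"

definition fork :: "nat \<Rightarrow> nat \<Rightarrow> (nat \<times> nat) set" where
  "fork h i = {(h, i), (h + 1, 2 * i - 1), (h + 1, 2 * i)}"

definition jstar :: "nat \<Rightarrow> nat \<Rightarrow> nat \<Rightarrow> nat \<Rightarrow> nat" where
  "jstar h i k j =
     (if dint (k - 1) j \<subseteq> dint (h + 1) (4 * i - 2) then j + 2 ^ (k - h - 2)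
      else if dint (k - 1) j \<subseteq> dint (h + 1) (4 * i - 1) then j - 2 ^ (k - h - 2)
      else j)"

definition Phi :: "nat \<Rightarrow> nat \<Rightarrow> (nat \<times> nat) set \<Rightarrow> (nat \<times> nat) set" where
  "Phi h i F = {(h + 1, 2 * i - 1), (h + 1, 2 * i)}
              \<union> {(k, jstar h i k j) | k j. (k, j) \<in> F - fork h i}"

end

theory Submission
  imports Defs
begin

text \<open>\<open>phi h i\<close> is the involution of \<open>[0, 1)\<close> swapping, by translation, the two middle
  quarters \<open>dint (h + 1) (4 * i - 2)\<close> and \<open>dint (h + 1) (4 * i - 1)\<close> of \<open>dint (h - 1) i\<close>.
  Apart from the intervals \<open>dint h (2 * i - 1)\<close>, \<open>dint h (2 * i)\<close> of the two children of
  \<open>(h, i)\<close>, every dyadic interval lies inside one swapped quarter, misses both, or contains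
  both, and \<open>phi h i\<close> maps \<open>dint (k - 1) (jstar h i k j)\<close> onto \<open>dint (k - 1) j\<close>. So the
  relabelling \<open>(k, j) \<mapsto> (k, jstar h i k j)\<close> carries the branch through \<open>phi h i t\<close> to the
  branch through \<open>t\<close>, while the two new children lie on a branch exactly when \<open>(h, i)\<close> does.
  Hence \<open>Phi h i F\<close> meets the branch through \<open>t\<close> in as many nodes as \<open>F\<close> meets the branch
  through \<open>phi h i t\<close>, and the local heights agree because \<open>phi h i\<close> permutes \<open>[0, 1)\<close>.
  The relabelling is injective and avoids the two children, which gives the count.\<close>

subsection \<open>Dyadic intervals\<close>

definition dyadic_index :: "nat \<Rightarrow> real \<Rightarrow> int" where
  "dyadic_index a t = \<lfloor>t * 2 ^ a\<rfloor>"

lemma mem_dint_iff: "t \<in> dint a j \<longleftrightarrow> dyadic_index a t = int j - 1"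
proof -
  have "t \<in> dint a j \<longleftrightarrow> real j - 1 \<le> t * 2 ^ a \<and> t * 2 ^ a < real j"
    by (simp add: dint_def pos_divide_le_eq pos_less_divide_eq)
  also have "\<dots> \<longleftrightarrow> dyadic_index a t = int j - 1"
    by (simp add: dyadic_index_def floor_eq_iff)
  finally show ?thesis .
qed

lemma dyadic_index_coarsen:
  assumes "b \<le> a"
  shows "dyadic_index b t = dyadic_index a t div 2 ^ (a - b)"
proof -
  have "(2::real) ^ a = 2 ^ b * 2 ^ (a - b)"
    using assms by (simp flip: power_add)
  then have "t * 2 ^ b = (t * 2 ^ a) / real_of_int (2 ^ (a - b))"
    by simp
  then show ?thesis
    unfolding dyadic_index_def by (metis floor_divide_real_eq_div zero_le_numeral zero_le_power)
qed

lemma dint_left_endpoint: "(real j - 1) / 2 ^ a \<in> dint a j"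
  by (simp add: dint_def divide_strict_right_mono)

lemma dint_lower_less_upper: "(real j - 1) / 2 ^ a < real j / 2 ^ a"
  by (simp add: divide_strict_right_mono)

lemma dint_unique: "t \<in> dint a j \<Longrightarrow> t \<in> dint a j' \<Longrightarrow> j = j'"
  by (simp add: mem_dint_iff)

lemma dint_subset_level:
  assumes "dint a j \<subseteq> dint b m"
  shows "b \<le> a"
proof -
  have "real j / 2 ^ a - (real j - 1) / 2 ^ a \<le> real m / 2 ^ b - (real m - 1) / 2 ^ b"
    using atLeastLessThan_subset_iff[OF assms[unfolded dint_def]] dint_lower_less_upper[of j a]
    by auto
  then have "(1::real) / 2 ^ a \<le> 1 / 2 ^ b"
    by (simp add: diff_divide_distrib)
  then have "(2::real) ^ b \<le> 2 ^ a"
    by (simp flip: inverse_eq_divide)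
  then show ?thesis
    by simp
qed

lemma dint_subset_iff:
  "dint a j \<subseteq> dint b m \<longleftrightarrow> b \<le> a \<and> (int j - 1) div 2 ^ (a - b) = int m - 1"
proof
  assume sub: "dint a j \<subseteq> dint b m"
  then have "b \<le> a"
    by (rule dint_subset_level)
  moreover have "(real j - 1) / 2 ^ a \<in> dint b m"
    using sub dint_left_endpoint by blast
  ultimately show "b \<le> a \<and> (int j - 1) div 2 ^ (a - b) = int m - 1"
    using dint_left_endpoint[of j a] by (simp add: mem_dint_iff dyadic_index_coarsen)
next
  assume "b \<le> a \<and> (int j - 1) div 2 ^ (a - b) = int m - 1"
  then show "dint a j \<subseteq> dint b m"
    by (auto simp: mem_dint_iff dyadic_index_coarsen)
qed

lemma dint_nested:
  assumes "b \<le> a" and "t \<in> dint a j" and "t \<in> dint b m"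
  shows "dint a j \<subseteq> dint b m"
  using assms by (simp add: dint_subset_iff mem_dint_iff dyadic_index_coarsen)

lemma dint_children:
  assumes "1 \<le> j"
  shows "dint (Suc a) (2 * j - 1) \<union> dint (Suc a) (2 * j) = dint a j"
proof -
  have "real (2 * j - 1) = 2 * real j - 1"
    using assms by (simp add: of_nat_diff)
  then show ?thesis
    unfolding dint_def by (auto simp: field_simps)
qed

lemma dint_translate:
  assumes "b \<le> a"
  shows "t + 1 / 2 ^ b \<in> dint a (j + 2 ^ (a - b)) \<longleftrightarrow> t \<in> dint a j"
proof -
  have "(2::real) ^ a = 2 ^ b * 2 ^ (a - b)"
    using assms by (simp flip: power_add)
  then have "real (j + 2 ^ (a - b)) / 2 ^ a = real j / 2 ^ a + 1 / 2 ^ b"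
    by (simp add: add_divide_distrib)
  then show ?thesis
    unfolding dint_def by (simp add: diff_divide_distrib)
qed

lemma dint_subset_right_neighbour:
  assumes sub: "dint a j \<subseteq> dint b (m + 1)" and m: "1 \<le> m"
  obtains j' where "j = j' + 2 ^ (a - b)" and "dint a j' \<subseteq> dint b m"
proof -
  have ba: "b \<le> a" and q: "(int j - 1) div 2 ^ (a - b) = int m"
    using sub by (simp_all add: dint_subset_iff)
  have shift_le: "2 ^ (a - b) \<le> int j - 1"
    using q m pos_imp_zdiv_pos_iff[of "2 ^ (a - b)" "int j - 1"] by simp
  then have "int (2 ^ (a - b)) \<le> int j"
    by simp
  then have "2 ^ (a - b) \<le> j"
    by (simp only: of_nat_le_iff)
  show ?thesis
  proof
    show "j = (j - 2 ^ (a - b)) + 2 ^ (a - b)"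
      using \<open>2 ^ (a - b) \<le> j\<close> by simp
    have "(int (j - 2 ^ (a - b)) - 1) div 2 ^ (a - b) = int m - 1"
      using q shift_le div_pos_geq[of "2 ^ (a - b)" "int j - 1"] \<open>2 ^ (a - b) \<le> j\<close>
      by (simp add: of_nat_diff algebra_simps)
    then show "dint a (j - 2 ^ (a - b)) \<subseteq> dint b m"
      using ba by (simp add: dint_subset_iff)
  qed
qed

lemma dtree_Suc_iff: "(Suc a, j) \<in> dtree \<longleftrightarrow> dint a j \<subseteq> {0..<1}"
proof -
  have "dint a j \<subseteq> {0..<1} \<longleftrightarrow> 0 \<le> (real j - 1) / 2 ^ a \<and> real j / 2 ^ a \<le> 1"
    unfolding dint_def
    using dint_lower_less_upper[of j a]
    by (auto dest: atLeastLessThan_subset_iff)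
  also have "\<dots> \<longleftrightarrow> 1 \<le> j \<and> j \<le> 2 ^ a"
    using le_divide_eq[of 0 "real j - 1" "2 ^ a"] divide_le_eq[of "real j" "2 ^ a" 1] by simp
  finally show ?thesis
    by (simp add: dtree_def)
qed

lemma dtree_memE:
  assumes "p \<in> dtree"
  obtains a j where "p = (Suc a, j)"
proof -
  obtain k j where p: "p = (k, j)"
    by fastforce
  then have "k = Suc (k - 1)"
    using assms by (simp add: dtree_def)
  with p show ?thesis
    using that by blast
qed

subsection \<open>The interchange map\<close>

definition phi :: "nat \<Rightarrow> nat \<Rightarrow> real \<Rightarrow> real" where
  "phi h i t =
     (if t \<in> dint (h + 1) (4 * i - 2) then t + 1 / 2 ^ (h + 1)
      else if t \<in> dint (h + 1) (4 * i - 1) then t - 1 / 2 ^ (h + 1)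
      else t)"

lemma phi_on_left: "t \<in> dint (h + 1) (4 * i - 2) \<Longrightarrow> phi h i t = t + 1 / 2 ^ (h + 1)"
  by (simp add: phi_def)

lemma phi_on_right:
  "1 \<le> i \<Longrightarrow> t \<in> dint (h + 1) (4 * i - 1) \<Longrightarrow> phi h i t = t - 1 / 2 ^ (h + 1)"
  using dint_unique[of t "h + 1" "4 * i - 2" "4 * i - 1"] by (auto simp: phi_def)

lemma phi_outside:
  "t \<notin> dint (h + 1) (4 * i - 2) \<Longrightarrow> t \<notin> dint (h + 1) (4 * i - 1) \<Longrightarrow> phi h i t = t"
  by (simp add: phi_def)

lemma phi_swaps:
  assumes "1 \<le> i"
  shows "t \<in> dint (h + 1) (4 * i - 2) \<Longrightarrow> phi h i t \<in> dint (h + 1) (4 * i - 1)"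
    and "t \<in> dint (h + 1) (4 * i - 1) \<Longrightarrow> phi h i t \<in> dint (h + 1) (4 * i - 2)"
proof -
  have translate: "s + 1 / 2 ^ (h + 1) \<in> dint (h + 1) (4 * i - 1) \<longleftrightarrow> s \<in> dint (h + 1) (4 * i - 2)"
    for s
  proof -
    have "4 * i - 1 = Suc (4 * i - 2)"
      using assms by simp
    then show ?thesis
      using dint_translate[of "h + 1" "h + 1" s "4 * i - 2"] by simp
  qed
  show "t \<in> dint (h + 1) (4 * i - 2) \<Longrightarrow> phi h i t \<in> dint (h + 1) (4 * i - 1)"
    using translate by (simp add: phi_on_left)
  show "t \<in> dint (h + 1) (4 * i - 1) \<Longrightarrow> phi h i t \<in> dint (h + 1) (4 * i - 2)"
    using translate[of "t - 1 / 2 ^ (h + 1)"] assms by (simp add: phi_on_right)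
qed

lemma phi_phi: "1 \<le> i \<Longrightarrow> phi h i (phi h i t) = t"
  using phi_swaps[of i t h] phi_on_left[of _ h i] phi_on_right[of i _ h] phi_outside[of t h i]
    dint_unique[of t "h + 1" "4 * i - 2" "4 * i - 1"]
  by (cases "t \<in> dint (h + 1) (4 * i - 2)"; cases "t \<in> dint (h + 1) (4 * i - 1)") auto

lemma phi_mem_dint_fixed:
  assumes i: "1 \<le> i" and s: "s \<in> dint a j"
    and not_left: "\<not> dint a j \<subseteq> dint (h + 1) (4 * i - 2)"
    and not_right: "\<not> dint a j \<subseteq> dint (h + 1) (4 * i - 1)"
    and not_child: "\<not> (a = h \<and> (j = 2 * i - 1 \<or> j = 2 * i))"
  shows "phi h i s \<in> dint a j"
proof (cases "s \<in> dint (h + 1) (4 * i - 2) \<union> dint (h + 1) (4 * i - 1)")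
  case False
  then show ?thesis
    using s phi_outside by simp
next
  case swapped: True
  have "1 \<le> 2 * i - 1" "1 \<le> 2 * i" "2 * (2 * i - 1) = 4 * i - 2" "2 * (2 * i) - 1 = 4 * i - 1"
    using i by simp_all
  then have halves: "dint (h + 1) (4 * i - 2) \<subseteq> dint h (2 * i - 1)"
      "dint (h + 1) (4 * i - 1) \<subseteq> dint h (2 * i)"
    using dint_children[of "2 * i - 1" h] dint_children[of "2 * i" h] by auto
  consider "h + 1 \<le> a" | "a = h" | "a < h"
    by linarith
  then show ?thesis
  proof cases
    case 1
    then show ?thesis
      using swapped s dint_nested[of "h + 1" a s j] not_left not_right by blast
  next
    case 2
    then show ?thesis
      using swapped s halves dint_unique[of s h j] not_child by blast
  next
    case 3
    then have "dint h (2 * i - 1) \<union> dint h (2 * i) = dint (h - 1) i"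
      using dint_children[of i "h - 1"] i by simp
    then have middle: "dint (h + 1) (4 * i - 2) \<union> dint (h + 1) (4 * i - 1) \<subseteq> dint (h - 1) i"
      using halves by blast
    moreover have "a \<le> h - 1"
      using 3 by simp
    ultimately have "dint (h - 1) i \<subseteq> dint a j"
      using swapped s dint_nested[of a "h - 1" s i j] by blast
    moreover have "phi h i s \<in> dint (h + 1) (4 * i - 2) \<union> dint (h + 1) (4 * i - 1)"
      using swapped phi_swaps[OF i] by blast
    ultimately show ?thesis
      using middle by blast
  qed
qed

lemma phi_mem_dint_fixed_iff:
  assumes "1 \<le> i"
    and "\<not> dint a j \<subseteq> dint (h + 1) (4 * i - 2)" and "\<not> dint a j \<subseteq> dint (h + 1) (4 * i - 1)"
    and "\<not> (a = h \<and> (j = 2 * i - 1 \<or> j = 2 * i))"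
  shows "phi h i s \<in> dint a j \<longleftrightarrow> s \<in> dint a j"
  using phi_mem_dint_fixed[OF assms(1) _ assms(2-4)] phi_phi[OF assms(1)] by metis

lemma phi_mem_dint_shift:
  assumes i: "1 \<le> i" and left: "dint a j \<subseteq> dint (h + 1) (4 * i - 2)"
  shows "phi h i t \<in> dint a j \<longleftrightarrow> t \<in> dint a (j + 2 ^ (a - (h + 1)))"
proof -
  have "h + 1 \<le> a"
    using left by (rule dint_subset_level)
  note translate = dint_translate[OF this]
  show ?thesis
  proof
    assume "phi h i t \<in> dint a j"
    moreover from this have "t = phi h i t + 1 / 2 ^ (h + 1)"
      using left phi_on_left[of "phi h i t" h i] phi_phi[OF i] by auto
    ultimately show "t \<in> dint a (j + 2 ^ (a - (h + 1)))"
      using translate by metis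
  next
    assume "t \<in> dint a (j + 2 ^ (a - (h + 1)))"
    then have shifted: "t - 1 / 2 ^ (h + 1) \<in> dint a j"
      using translate[of "t - 1 / 2 ^ (h + 1)"] by simp
    then have "phi h i (t - 1 / 2 ^ (h + 1)) = t"
      using left phi_on_left by auto
    then have "phi h i t = t - 1 / 2 ^ (h + 1)"
      using phi_phi[OF i] by metis
    with shifted show "phi h i t \<in> dint a j"
      by simp
  qed
qed

lemma mem_dint_jstar_iff:
  assumes i: "1 \<le> i" and not_child: "\<not> (a = h \<and> (j = 2 * i - 1 \<or> j = 2 * i))"
  shows "t \<in> dint a (jstar h i (Suc a) j) \<longleftrightarrow> phi h i t \<in> dint a j"
proof -
  have exponent: "Suc a - h - 2 = a - (h + 1)"
    by simp
  consider (left) "dint a j \<subseteq> dint (h + 1) (4 * i - 2)"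
    | (right) "\<not> dint a j \<subseteq> dint (h + 1) (4 * i - 2)" "dint a j \<subseteq> dint (h + 1) (4 * i - 1)"
    | (neither) "\<not> dint a j \<subseteq> dint (h + 1) (4 * i - 2)" "\<not> dint a j \<subseteq> dint (h + 1) (4 * i - 1)"
    by blast
  then show ?thesis
  proof cases
    case left
    then show ?thesis
      using phi_mem_dint_shift[OF i left] by (simp add: jstar_def exponent)
  next
    case right
    have "4 * i - 2 + 1 = 4 * i - 1"
      using i by simp
    then have "dint a j \<subseteq> dint (h + 1) (4 * i - 2 + 1)"
      using right(2) by (simp only:)
    then obtain j' where j: "j = j' + 2 ^ (a - (h + 1))" and left': "dint a j' \<subseteq> dint (h + 1) (4 * i - 2)"
      using i by (elim dint_subset_right_neighbour) simp
    have "jstar h i (Suc a) j = j'"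
      using right by (simp add: jstar_def exponent j)
    then show ?thesis
      using phi_mem_dint_shift[OF i left', of "phi h i t"] by (simp add: phi_phi[OF i] j)
  next
    case neither
    then show ?thesis
      using phi_mem_dint_fixed_iff[OF i neither not_child] by (simp add: jstar_def)
  qed
qed

lemma phi_mem_unit_iff:
  assumes "1 \<le> h" and "1 \<le> i"
  shows "phi h i t \<in> {0..<1} \<longleftrightarrow> t \<in> {0..<1}"
proof -
  have "dint 0 1 = {0..<1}"
    by (simp add: dint_def)
  moreover have "\<not> dint 0 1 \<subseteq> dint (h + 1) m" for m
    by (auto dest: dint_subset_level)
  ultimately show ?thesis
    using phi_mem_dint_fixed_iff[OF assms(2), of 0 1 h t] assms(1) by simp
qed

lemma phi_image_unit:
  assumes "1 \<le> h" and "1 \<le> i"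
  shows "phi h i ` {0..<1} = {0..<1}"
proof
  show "phi h i ` {0..<1} \<subseteq> {0..<1}"
    using phi_mem_unit_iff[OF assms] by blast
  show "{0..<1} \<subseteq> phi h i ` {0..<1}"
  proof
    fix t :: real
    assume "t \<in> {0..<1}"
    then have "phi h i t \<in> {0..<1}"
      using phi_mem_unit_iff[OF assms] by blast
    moreover have "t = phi h i (phi h i t)"
      using phi_phi[OF assms(2)] by simp
    ultimately show "t \<in> phi h i ` {0..<1}"
      by blast
  qed
qed

subsection \<open>Relabelling the tree\<close>

definition relabel :: "nat \<Rightarrow> nat \<Rightarrow> nat \<times> nat \<Rightarrow> nat \<times> nat" where
  "relabel h i = (\<lambda>(k, j). (k, jstar h i k j))"

lemma Phi_eq_relabel:
  "Phi h i F = {(h + 1, 2 * i - 1), (h + 1, 2 * i)} \<union> relabel h i ` (F - fork h i)"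
  by (auto simp: Phi_def relabel_def image_iff)

lemma relabel_not_child:
  assumes "p \<notin> fork h i"
  shows "relabel h i p \<notin> {(h + 1, 2 * i - 1), (h + 1, 2 * i)}"
proof -
  obtain k j where p: "p = (k, j)"
    by fastforce
  have "\<not> dint h j \<subseteq> dint (h + 1) m" for m
    by (auto dest: dint_subset_level)
  then have "jstar h i (h + 1) j = j"
    by (simp add: jstar_def)
  then show ?thesis
    using assms by (auto simp: p relabel_def fork_def)
qed

lemma inj_on_relabel:
  assumes i: "1 \<le> i"
  shows "inj_on (relabel h i) (dtree - fork h i)"
proof (rule inj_onI)
  fix p q
  assume p: "p \<in> dtree - fork h i" and q: "q \<in> dtree - fork h i" and eq: "relabel h i p = relabel h i q"
  obtain a j where p_eq: "p = (Suc a, j)"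
    using dtree_memE[of p] p by blast
  obtain j' where q_eq: "q = (Suc a, j')"
    using eq by (cases q) (auto simp: p_eq relabel_def)
  let ?J = "jstar h i (Suc a) j"
  have not_child: "\<not> (a = h \<and> (j = 2 * i - 1 \<or> j = 2 * i))" "\<not> (a = h \<and> (j' = 2 * i - 1 \<or> j' = 2 * i))"
    using p q by (auto simp: p_eq q_eq fork_def)
  have "jstar h i (Suc a) j' = ?J"
    using eq by (simp add: p_eq q_eq relabel_def)
  then have "phi h i ((real ?J - 1) / 2 ^ a) \<in> dint a j \<inter> dint a j'"
    using dint_left_endpoint[of ?J a] mem_dint_jstar_iff[OF i not_child(1)] mem_dint_jstar_iff[OF i not_child(2)]
    by auto
  then show "p = q"
    using dint_unique by (auto simp: p_eq q_eq)
qed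

lemma relabel_mem_branch_iff:
  assumes h: "1 \<le> h" and i: "1 \<le> i" and p: "p \<in> dtree - fork h i"
  shows "relabel h i p \<in> branch t \<longleftrightarrow> p \<in> branch (phi h i t)"
proof -
  obtain a j where p_eq: "p = (Suc a, j)"
    using dtree_memE[of p] p by blast
  let ?J = "jstar h i (Suc a) j"
  have "\<not> (a = h \<and> (j = 2 * i - 1 \<or> j = 2 * i))"
    using p by (auto simp: p_eq fork_def)
  note jstar_iff = mem_dint_jstar_iff[OF i this]
  have "dint a j \<subseteq> {0..<1}"
    using p by (simp add: p_eq dtree_Suc_iff)
  then have "dint a ?J \<subseteq> {0..<1}"
    using jstar_iff phi_mem_unit_iff[OF h i] by blast
  then have "(Suc a, ?J) \<in> dtree"
    by (simp add: dtree_Suc_iff)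
  then show ?thesis
    using p jstar_iff by (auto simp: p_eq relabel_def branch_def)
qed

lemma card_children_inter_branch:
  assumes "(h, i) \<in> dtree"
  shows "card ({(h + 1, 2 * i - 1), (h + 1, 2 * i)} \<inter> branch t) = card ({(h, i)} \<inter> branch t)"
proof -
  have h: "h = Suc (h - 1)" and i: "1 \<le> i"
    using assms by (auto simp: dtree_def)
  have split: "dint h (2 * i - 1) \<union> dint h (2 * i) = dint (h - 1) i"
    using dint_children[OF i, of "h - 1"] h by simp
  have "dint (h - 1) i \<subseteq> {0..<1}"
    using assms h dtree_Suc_iff[of "h - 1" i] by simp
  then have children: "(h + 1, 2 * i - 1) \<in> dtree" "(h + 1, 2 * i) \<in> dtree"
    using split dtree_Suc_iff by auto
  have distinct: "2 * i - 1 \<noteq> 2 * i"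
    using i by simp
  have in_branch: "(h + 1, 2 * i - 1) \<in> branch t \<longleftrightarrow> t \<in> dint h (2 * i - 1)"
      "(h + 1, 2 * i) \<in> branch t \<longleftrightarrow> t \<in> dint h (2 * i)"
      "(h, i) \<in> branch t \<longleftrightarrow> t \<in> dint (h - 1) i"
    using children assms by (simp_all add: branch_def)
  consider "t \<in> dint h (2 * i - 1)" | "t \<in> dint h (2 * i)" | "t \<notin> dint (h - 1) i"
    using split by blast
  then show ?thesis
  proof cases
    case 1
    then have "t \<notin> dint h (2 * i)"
      using distinct dint_unique by blast
    with 1 show ?thesis
      using split in_branch distinct by (auto simp: Int_insert_left)
  next
    case 2
    then have "t \<notin> dint h (2 * i - 1)"
      using distinct dint_unique by blast
    with 2 show ?thesis
      using split in_branch distinct by (auto simp: Int_insert_left)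
  next
    case 3
    then show ?thesis
      using split in_branch by (auto simp: Int_insert_left)
  qed
qed

lemma card_Phi:
  assumes "F \<subseteq> dtree" and "finite F" and "admissible F h i"
  shows "card (Phi h i F) = card F + 1"
proof -
  have root: "(h, i) \<in> F" and rest: "F - fork h i = F - {(h, i)}"
    using assms(3) by (auto simp: admissible_def fork_def)
  then have i: "1 \<le> i"
    using assms(1) by (auto simp: dtree_def)
  have "relabel h i ` (F - fork h i) \<inter> {(h + 1, 2 * i - 1), (h + 1, 2 * i)} = {}"
    using relabel_not_child by blast
  then have "card (Phi h i F) = 2 + card (relabel h i ` (F - fork h i))"
    using assms(2) i by (simp add: Phi_eq_relabel card_Un_disjoint Int_commute)
  also have "card (relabel h i ` (F - fork h i)) = card (F - fork h i)"
    using assms(1) by (intro card_image inj_on_subset[OF inj_on_relabel[OF i]]) blast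
  also have "card (F - fork h i) = card F - 1"
    using rest root assms(2) by simp
  finally have "card (Phi h i F) = 2 + (card F - 1)" .
  moreover have "0 < card F"
    using root assms(2) by (auto simp: card_gt_0_iff)
  ultimately show ?thesis
    by simp
qed

lemma card_Phi_inter_branch:
  assumes "F \<subseteq> dtree" and "finite F" and "admissible F h i"
  shows "card (Phi h i F \<inter> branch t) = card (F \<inter> branch (phi h i t))"
proof -
  define R where "R = F - fork h i"
  have root: "(h, i) \<in> dtree" and F_eq: "F = insert (h, i) R" and "(h, i) \<notin> R"
    using assms by (auto simp: admissible_def fork_def R_def)
  then have h: "1 \<le> h" and i: "1 \<le> i"
    by (auto simp: dtree_def)
  have R: "R \<subseteq> dtree - fork h i" "finite R"
    using assms(1,2) by (auto simp: R_def)
  have relabel_R: "relabel h i ` R \<inter> branch t = relabel h i ` (R \<inter> branch (phi h i t))"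
    using relabel_mem_branch_iff[OF h i] R(1) by auto
  have "\<not> dint (h - 1) i \<subseteq> dint (h + 1) m" for m
    by (auto dest: dint_subset_level)
  moreover have "h - 1 \<noteq> h"
    using h by simp
  ultimately have "phi h i t \<in> dint (h - 1) i \<longleftrightarrow> t \<in> dint (h - 1) i"
    using phi_mem_dint_fixed_iff[OF i, of "h - 1" i h t] by blast
  then have root_branch: "{(h, i)} \<inter> branch (phi h i t) = {(h, i)} \<inter> branch t"
    using root by (auto simp: branch_def)
  have "relabel h i ` R \<inter> {(h + 1, 2 * i - 1), (h + 1, 2 * i)} = {}"
    using relabel_not_child R(1) by blast
  then have "card (Phi h i F \<inter> branch t) =
      card ({(h + 1, 2 * i - 1), (h + 1, 2 * i)} \<inter> branch t) + card (relabel h i ` R \<inter> branch t)"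
    unfolding Phi_eq_relabel R_def[symmetric] Int_Un_distrib2
    using R(2) by (intro card_Un_disjoint) auto
  also have "card (relabel h i ` R \<inter> branch t) = card (R \<inter> branch (phi h i t))"
    unfolding relabel_R using R(1)
    by (intro card_image inj_on_subset[OF inj_on_relabel[OF i]]) blast
  also have "card ({(h + 1, 2 * i - 1), (h + 1, 2 * i)} \<inter> branch t) = card ({(h, i)} \<inter> branch (phi h i t))"
    using card_children_inter_branch[OF root] root_branch by simp
  also have "card ({(h, i)} \<inter> branch (phi h i t)) + card (R \<inter> branch (phi h i t)) = card (F \<inter> branch (phi h i t))"
    using R(2) \<open>(h, i) \<notin> R\<close> by (simp add: F_eq Int_insert_left)
  finally show ?thesis .
qed

lemma lh_eq_by_reparametrization:
  assumes "\<And>t. card (G \<inter> branch t) = card (F \<inter> branch (f t))" and "f ` {0..<1} = {0..<1}"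
  shows "lh G = lh F"
proof -
  have "(\<lambda>t. card (G \<inter> branch t)) ` {0..<1} = (\<lambda>t. card (F \<inter> branch t)) ` f ` {0..<1}"
    using assms(1) by (simp add: image_image)
  then show ?thesis
    using assms(2) by (simp add: lh_def)
qed

theorem lemma3p6:
  fixes F :: "(nat \<times> nat) set" and h i :: nat
  assumes "F \<subseteq> dtree" and "finite F" and "admissible F h i"
  shows "card (Phi h i F) = card F + 1 \<and> lh (Phi h i F) = lh F"
proof -
  have "(h, i) \<in> dtree"
    using assms(1,3) by (auto simp: admissible_def)
  then have "phi h i ` {0..<1} = {0..<1}"
    by (intro phi_image_unit) (simp_all add: dtree_def)
  with card_Phi_inter_branch[OF assms] have "lh (Phi h i F) = lh F"
    by (rule lh_eq_by_reparametrization)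
  with card_Phi[OF assms] show ?thesis
    by simp
qed

end
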